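(* Let $q=2^m\geq 4$ with $m$ a positive integer, let $b\in\mathbb{F}_q^*$ and $\delta\in\mathbb{F}_{q^2}\setminus\mathbb{F}_q$. Put $$B=b^4\delta^{q+1}\mathrm{Tr}_{q^2/q}(\delta),\quad C=b^4\mathrm{Tr}_{q^2/q}(\delta),\quad D=b^4\mathrm{Tr}_{q^2/q}(\delta)^2,$$ and define $S_{-1}=0$, $S_0=1$, $S_i=C^{2^{i-1}}S_{i-1}+D^{2^{i-1}}S_{i-2}$ for $i\geq1$. If the polynomial $$P(x)=b(x^q+x+\delta)^{q(2q+1)/4}+x$$ permutes $\mathbb{F}_{q^2}$, then its compositional inverse over $\mathbb{F}_{q^2}$ is $$P^{-1}(x)=x+b\left(\delta+\sum_{i=0}^{m-1}\left(S_{m-2-i}^{2^{i+1}}+D^{1-2^{i+1}}S_i\right)\left(x^{4q}+x^4+B\right)^{2^i}\right)^{q(2q+1)/4}.$$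
   Context: $\mathrm{Tr}_{q^2/q}(y)=y+y^q$. The compositional inverse of a permutation polynomial $f$ of $\mathbb{F}_{Q}$ is the unique polynomial $f^{-1}$ (modulo $x^Q-x$) with $f(f^{-1}(c))=f^{-1}(f(c))=c$ for all $c\in\mathbb{F}_Q$. *)

theory Defs
  imports Main
begin

definition Tr :: "nat \<Rightarrow> 'a::field \<Rightarrow> 'a" where
  "Tr q y = y + y ^ q"

text \<open>Shifted sequence: Ssh C D k = S_(k-1), so Ssh C D 0 = S_(-1) = 0,
  Ssh C D 1 = S_0 = 1, and S_i = C^(2^(i-1)) S_(i-1) + D^(2^(i-1)) S_(i-2).\<close>
fun Ssh :: "'a::field \<Rightarrow> 'a \<Rightarrow> nat \<Rightarrow> 'a" where
  "Ssh C D 0 = 0"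
| "Ssh C D (Suc 0) = 1"
| "Ssh C D (Suc (Suc n)) = C ^ (2 ^ n) * Ssh C D (Suc n) + D ^ (2 ^ n) * Ssh C D n"

end

theory Submission
  imports Defs "HOL-Number_Theory.Residues" "HOL-Computational_Algebra.Polynomial"
begin

text \<open>
  Let F = {u. u^q = u} and e = q(2q+1)/4. For u = x^q + x in F, the identity (z^e)^4 = z^2 z^q
  gives P(x)^(4q) + P(x)^4 + B = L(u) with the 2-linearized polynomial L(u) = u^4 + C u^2 + D u
  over F. The sum in the claimed inverse is a 2-linearized polynomial M, and the recurrence of S
  together with its squared form S_i = C S_(i-1)^2 + D^2 S_(i-2)^4 makes M(L(u)) telescope to
  tau u on F, where tau = S_m + D S_(m-2)^2 satisfies tau^2 = tau.
  If P is a permutation, L has no nonzero root w in F, since otherwise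
  P(P(0) + b(delta + w)^e) = P(0). So L maps F onto F, and tau = 0 would make M vanish on F;
  then all coefficients of M vanish, forcing S_(m-1) = 0 and S_m = 1, and for such S the element
  sum_j (beta S_(m-1-j))^(2^j) is a nonzero root of L in F for some beta in F. Hence tau = 1,
  and P^-1(P(x)) = P(x) + b(delta + u)^e = x.
\<close>

section \<open>Characteristic two and finite fields\<close>

lemma power2_power2: "(x ^ 2 ^ i) ^ 2 ^ j = (x::'a::monoid_mult) ^ 2 ^ (i + j)"
  by (simp add: power_mult[symmetric] power_add)

lemma power2_power2_numeral:
  "(x ^ 2) ^ 2 ^ i = (x::'a::monoid_mult) ^ 2 ^ (i + 1)" "(x ^ 4) ^ 2 ^ i = x ^ 2 ^ (i + 2)"
  by (simp_all add: power_mult[symmetric] power_add mult.commute)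

lemma sum_lessThan_Suc_shift_cyclic:
  assumes "g m = g 0"
  shows "(\<Sum>j<m. g (Suc j)) = (\<Sum>j<m. g j :: 'a::cancel_comm_monoid_add)"
proof -
  have "g 0 + (\<Sum>j<m. g (Suc j)) = (\<Sum>j<m. g j) + g 0"
    using sum.lessThan_Suc_shift[of g m] sum.lessThan_Suc[of g m] assms by simp
  then show ?thesis
    by (simp add: add.commute)
qed

lemma powi_one_minus_power2:
  assumes "(D::'a::field) \<noteq> 0"
  shows "D powi (1 - 2 ^ k) = D / D ^ 2 ^ k"
proof -
  have "D powi ((2::int) ^ k) = D ^ 2 ^ k"
    using power_int_of_nat[of D "2 ^ k"] by simp
  then show ?thesis
    using assms by (simp add: power_int_diff)
qed

context
  assumes char_2: "(2::'a::comm_ring_1) = 0"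
begin

lemma char2_add_self: "x + x = (0::'a)"
  by (metis char_2 mult_2 mult_zero_left)

lemma char2_add_eq_0_iff: "x + y = (0::'a) \<longleftrightarrow> x = y"
proof -
  have "- y = y"
    using neg_eq_iff_add_eq_0[of y y] char2_add_self by simp
  then show ?thesis
    by (simp only: add_eq_0_iff2)
qed

lemma char2_power2_add: "(x + y :: 'a) ^ 2 ^ k = x ^ 2 ^ k + y ^ 2 ^ k"
proof (induction k)
  case (Suc k)
  have "(x + y) ^ 2 ^ Suc k = ((x + y) ^ 2 ^ k)\<^sup>2"
    by (simp add: power_mult[symmetric] mult.commute)
  also have "\<dots> = (x ^ 2 ^ k)\<^sup>2 + (y ^ 2 ^ k)\<^sup>2"
    unfolding Suc.IH power2_sum by (simp add: char_2)
  finally show ?case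
    by (simp add: power_mult[symmetric] mult.commute)
qed simp

lemma char2_power2_sum: "(\<Sum>i\<in>A. f i :: 'a) ^ 2 ^ k = (\<Sum>i\<in>A. f i ^ 2 ^ k)"
  by (induction A rule: infinite_finite_induct) (simp_all add: char2_power2_add power_0_left)

end

lemma char2_power2_inj:
  assumes "(2::'a::idom) = 0" and "x ^ 2 ^ k = (y::'a) ^ 2 ^ k"
  shows "x = y"
proof -
  have "(x + y) ^ 2 ^ k = 0"
    using assms by (simp add: char2_power2_add)
  then show ?thesis
    using assms(1) by (simp add: char2_add_eq_0_iff)
qed

lemma card_power2_imp_char2:
  assumes "card (UNIV :: 'a::{field,finite} set) = 2 ^ k" and "k \<noteq> 0"
  shows "(2::'a) = 0"
proof -
  have "prime CHAR('a)"
    by (simp add: prime_CHAR_semidom finite_imp_CHAR_pos)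
  moreover have "CHAR('a) dvd 2 ^ k"
    using CHAR_dvd_CARD[where 'a='a] assms(1) by simp
  ultimately have "CHAR('a) = 2"
    by (metis prime_dvd_power primes_dvd_imp_eq two_is_prime_nat)
  then show ?thesis
    using of_nat_CHAR[where 'a='a] by simp
qed

text \<open>The library's \<open>finite_field_power_card_eq_same\<close> needs the class \<open>finite_field\<close>,
  which the sort \<open>{field, finite}\<close> does not provide.\<close>
lemma field_power_card_eq_self: "(x::'a::{field,finite}) ^ card (UNIV :: 'a set) = x"
proof (cases "x = 0")
  case False
  let ?U = "UNIV - {0::'a}"
  have "x ^ card ?U * \<Prod>?U = (\<Prod>y\<in>?U. x * y)"
    by (simp only: prod.distrib prod_constant)
  also have "\<dots> = \<Prod>?U"
    by (rule prod.reindex_bij_witness[of _ "\<lambda>y. y / x" "\<lambda>y. x * y"]) (use False in auto)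
  finally have "x ^ card ?U = 1"
    by (simp add: prod_zero_iff)
  moreover have "card (UNIV :: 'a set) = Suc (card ?U)"
    by (rule card_Suc_Diff1[symmetric]) auto
  ultimately show ?thesis
    by (metis power_Suc mult_1_right)
next
  case True
  then show ?thesis
    by (simp add: zero_power finite_UNIV_card_ge_0)
qed

lemma card_UNIV_le_card_range_mult_card_kernel:
  fixes f :: "'a::{ab_group_add,finite} \<Rightarrow> 'b::ab_group_add"
  assumes additive: "\<And>x y. f (x + y) = f x + f y"
  shows "card (UNIV :: 'a set) \<le> card (range f) * card {k. f k = 0}"
proof -
  have f_diff: "f (x - y) = f x - f y" for x y
    using additive[of "x - y" y] by simp
  have "UNIV \<subseteq> (\<lambda>(c, k). inv_into UNIV f c + k) ` (range f \<times> {k. f k = 0})"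
  proof
    fix x :: 'a
    have "x = inv_into UNIV f (f x) + (x - inv_into UNIV f (f x))"
      and "f (x - inv_into UNIV f (f x)) = 0"
      by (simp_all add: f_diff f_inv_into_f)
    then show "x \<in> (\<lambda>(c, k). inv_into UNIV f c + k) ` (range f \<times> {k. f k = 0})"
      by (intro image_eqI[of _ _ "(f x, x - inv_into UNIV f (f x))"]) auto
  qed
  then have "card (UNIV :: 'a set)
      \<le> card ((\<lambda>(c, k). inv_into UNIV f c + k) ` (range f \<times> {k. f k = 0}))"
    by (intro card_mono) auto
  also have "\<dots> \<le> card (range f) * card {k. f k = 0}"
    using card_image_le[of "range f \<times> {k. f k = 0}"] by (simp add: card_cartesian_product)
  finally show ?thesis .
qed

lemma linearized_poly_eq_0_imp_coeff_eq_0: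
  fixes c :: "nat \<Rightarrow> 'a::field"
  assumes card: "2 ^ m \<le> card A"
    and roots: "\<And>x. x \<in> A \<Longrightarrow> (\<Sum>i<m. c i * x ^ 2 ^ i) = 0"
    and "j < m"
  shows "c j = 0"
proof -
  define p where "p = (\<Sum>i<m. Polynomial.monom (c i) (2 ^ i))"
  have coeff_p: "coeff p k = (\<Sum>i<m. if 2 ^ i = k then c i else 0)" for k
    by (simp add: p_def coeff_sum)
  have "p = 0"
  proof (rule ccontr)
    assume "p \<noteq> 0"
    have "degree p \<le> 2 ^ (m - 1)"
    proof (rule degree_le, intro allI impI)
      fix k :: nat
      assume "2 ^ (m - 1) < k"
      moreover have "(2::nat) ^ i \<le> 2 ^ (m - 1)" if "i < m" for i
        using that by (intro power_increasing) auto
      ultimately show "coeff p k = 0"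
        unfolding coeff_p by (intro sum.neutral) (auto simp: not_le[symmetric])
    qed
    moreover have "finite A"
      using card by (metis card.infinite le_zero_eq power_not_zero zero_neq_numeral)
    then have "card A \<le> card {x. poly p x = 0}"
      using roots \<open>p \<noteq> 0\<close>
      by (intro card_mono poly_roots_finite) (auto simp: p_def poly_sum poly_monom)
    moreover have "card {x. poly p x = 0} \<le> degree p"
      by (rule card_poly_roots_bound[OF \<open>p \<noteq> 0\<close>])
    moreover have "(2::nat) ^ (m - 1) < 2 ^ m"
      using \<open>j < m\<close> by (intro power_strict_increasing) auto
    ultimately show False
      using card by linarith
  qed
  moreover have "coeff p (2 ^ j) = c j"
    unfolding coeff_p using \<open>j < m\<close> by (simp add: sum.delta'[symmetric] cong: if_cong)
  ultimately show ?thesis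
    by simp
qed

section \<open>The sequence S\<close>

declare Ssh.simps(3) [simp del]

lemma Ssh_recurrence: "Ssh C D (k + 2) = C ^ 2 ^ k * Ssh C D (k + 1) + D ^ 2 ^ k * Ssh C D k"
  by (simp add: Ssh.simps(3) numeral_eq_Suc)

lemma Ssh_not_both_zero:
  "D \<noteq> 0 \<Longrightarrow> \<not> (Ssh C D k = 0 \<and> Ssh C D (k + 1) = (0::'a::field))"
proof (induction k)
  case (Suc k)
  then show ?case
    using Ssh_recurrence[of C D k] by auto
qed simp

lemma Ssh_periodic:
  fixes C D :: "'a::field"
  assumes "C ^ 2 ^ m = C" "D ^ 2 ^ m = D" "Ssh C D m = 0" "Ssh C D (m + 1) = 1"
  shows "Ssh C D (m + k) = Ssh C D k"
proof (induction k rule: induct_nat_012)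
  case (ge2 n)
  have "Ssh C D (m + Suc (Suc n)) = Ssh C D (m + n + 2)"
    by simp
  also have "\<dots> = C ^ 2 ^ (m + n) * Ssh C D (m + n + 1) + D ^ 2 ^ (m + n) * Ssh C D (m + n)"
    by (rule Ssh_recurrence)
  also have "\<dots> = C ^ 2 ^ n * Ssh C D (n + 1) + D ^ 2 ^ n * Ssh C D n"
    using ge2 by (simp add: power_add power_mult assms(1,2))
  also have "\<dots> = Ssh C D (Suc (Suc n))"
    using Ssh_recurrence[of C D n] by simp
  finally show ?case .
qed (use assms in simp_all)

context
  assumes char_2: "(2::'a::field) = 0"
begin

lemma Ssh_power2_recurrence:
  "Ssh C D (k + 2) ^ 2 ^ j = C ^ 2 ^ (k + j) * Ssh C D (k + 1) ^ 2 ^ j + D ^ 2 ^ (k + j) * Ssh C D k ^ 2 ^ j"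
  for C D :: 'a
  unfolding Ssh_recurrence by (simp add: char2_power2_add[OF char_2] power_mult_distrib power2_power2)

lemma Ssh_squaring_recurrence:
  "Ssh C D (n + 2) = C * Ssh C D (n + 1) ^ 2 + D ^ 2 * Ssh C D n ^ 4" for C D :: 'a
proof (induction n rule: induct_nat_012)
  case (ge2 n)
  let ?s = "Ssh C D"
  have "?s (Suc (Suc n) + 2) = C ^ 2 ^ (n + 2) * ?s (n + 3) + D ^ 2 ^ (n + 2) * ?s (n + 2)"
    using Ssh_recurrence[of C D "n + 2"] by (simp add: numeral_eq_Suc)
  also have "\<dots> = C ^ 2 ^ (n + 2) * (C * ?s (n + 2) ^ 2 + D ^ 2 * ?s (n + 1) ^ 4)
      + D ^ 2 ^ (n + 2) * (C * ?s (n + 1) ^ 2 + D ^ 2 * ?s n ^ 4)"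
    using ge2 by (simp add: numeral_eq_Suc)
  also have "\<dots> = C * (C ^ 2 ^ (n + 2) * ?s (n + 2) ^ 2 + D ^ 2 ^ (n + 2) * ?s (n + 1) ^ 2)
      + D ^ 2 * (C ^ 2 ^ (n + 2) * ?s (n + 1) ^ 4 + D ^ 2 ^ (n + 2) * ?s n ^ 4)"
    by (simp add: algebra_simps)
  also have "\<dots> = C * ?s (Suc (Suc n) + 1) ^ 2 + D ^ 2 * ?s (Suc (Suc n)) ^ 4"
    using Ssh_power2_recurrence[of C D "n + 1" 1] Ssh_power2_recurrence[of C D n 2]
    by (simp add: numeral_eq_Suc)
  finally show ?case .
qed (simp_all add: Ssh.simps(3) algebra_simps power2_eq_square)

lemma Ssh_power_fixed:
  fixes C D :: 'a
  assumes "C ^ 2 ^ m = C" "D ^ 2 ^ m = D"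
  shows "Ssh C D k ^ 2 ^ m = Ssh C D k"
proof (induction k rule: induct_nat_012)
  case (ge2 n)
  have "(C ^ 2 ^ n) ^ 2 ^ m = C ^ 2 ^ n" "(D ^ 2 ^ n) ^ 2 ^ m = D ^ 2 ^ n"
    by (metis assms power_mult mult.commute)+
  with ge2 show ?case
    using Ssh_recurrence[of C D n] by (simp add: char2_power2_add[OF char_2] power_mult_distrib)
qed simp_all

end

section \<open>The linearized quartic and its inverse\<close>

definition lin_quartic :: "'a::comm_ring_1 \<Rightarrow> 'a \<Rightarrow> 'a \<Rightarrow> 'a" where
  "lin_quartic C D w = w ^ 4 + C * w ^ 2 + D * w"

definition lin_inverse_coeff :: "'a::field \<Rightarrow> 'a \<Rightarrow> nat \<Rightarrow> nat \<Rightarrow> 'a" where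
  "lin_inverse_coeff C D m i =
    Ssh C D (m - 1 - i) ^ 2 ^ (i + 1) + D powi (1 - 2 ^ (i + 1)) * Ssh C D (i + 1)"

definition lin_inverse :: "'a::field \<Rightarrow> 'a \<Rightarrow> nat \<Rightarrow> 'a \<Rightarrow> 'a" where
  "lin_inverse C D m a = (\<Sum>i<m. lin_inverse_coeff C D m i * a ^ 2 ^ i)"

definition lin_scale :: "'a::field \<Rightarrow> 'a \<Rightarrow> nat \<Rightarrow> 'a" where
  "lin_scale C D m = Ssh C D (m + 1) + D * Ssh C D (m - 1) ^ 2"

context
  assumes char_2: "(2::'a::comm_ring_1) = 0"
begin

lemma lin_quartic_add: "lin_quartic C D (u + v) = lin_quartic C D u + lin_quartic (C::'a) D v"
proof -
  have "(u + v) ^ 2 = u ^ 2 + v ^ 2" "(u + v) ^ 4 = u ^ 4 + v ^ 4"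
    using char2_power2_add[OF char_2, of u v 1] char2_power2_add[OF char_2, of u v 2] by simp_all
  then show ?thesis
    by (simp add: lin_quartic_def algebra_simps)
qed

lemma lin_quartic_power2:
  "lin_quartic C D u ^ 2 ^ i = u ^ 2 ^ (i + 2) + C ^ 2 ^ i * u ^ 2 ^ (i + 1) + D ^ 2 ^ i * (u::'a) ^ 2 ^ i"
  by (simp add: lin_quartic_def char2_power2_add[OF char_2] power_mult_distrib
      power2_power2_numeral)

lemma lin_quartic_fixed:
  assumes "C ^ 2 ^ m = C" "D ^ 2 ^ m = D" "u ^ 2 ^ m = (u::'a)"
  shows "lin_quartic C D u ^ 2 ^ m = lin_quartic C D u"
proof -
  have "u ^ (k * 2 ^ m) = u ^ k" for k
    by (metis assms(3) mult.commute power_mult)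
  then show ?thesis
    unfolding lin_quartic_power2 using assms by (simp add: lin_quartic_def)
qed

lemma sum_mult_lin_quartic_power2:
  fixes c :: "nat \<Rightarrow> 'a"
  assumes u: "u ^ 2 ^ (n + 2) = u"
    and rec: "\<And>i. i < n \<Longrightarrow> c i + C ^ 2 ^ (i + 1) * c (i + 1) + D ^ 2 ^ (i + 2) * c (i + 2) = 0"
  shows "(\<Sum>i<n + 2. c i * lin_quartic C D u ^ 2 ^ i) =
    (c n + C ^ 2 ^ (n + 1) * c (n + 1) + D * c 0) * u + (c (n + 1) + C * c 0 + D ^ 2 * c 1) * u ^ 2"
proof -
  define U where "U k = u ^ 2 ^ k" for k
  have "(2::nat) ^ (n + 3) = 2 ^ (n + 2) * 2"
    by (simp add: power_add)
  then have "U (n + 3) = (u ^ 2 ^ (n + 2)) ^ 2"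
    unfolding U_def by (simp only: power_mult)
  then have U: "U 0 = u" "U 1 = u ^ 2" "U (n + 2) = u" "U (n + 3) = u ^ 2"
    using u by (simp_all add: U_def)
  have "(\<Sum>i<n + 2. c i * lin_quartic C D u ^ 2 ^ i)
      = (\<Sum>i<n + 2. c i * U (i + 2)) + (\<Sum>i<n + 2. C ^ 2 ^ i * c i * U (i + 1))
        + (\<Sum>i<n + 2. D ^ 2 ^ i * c i * U i)"
    by (simp add: lin_quartic_power2 U_def sum.distrib algebra_simps)
  also have "(\<Sum>i<n + 2. c i * U (i + 2)) = (\<Sum>i<n. c i * U (i + 2)) + c n * u + c (n + 1) * u ^ 2"
    using U by (simp add: numeral_eq_Suc)
  also have "(\<Sum>i<n + 2. C ^ 2 ^ i * c i * U (i + 1))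
      = C * c 0 * u ^ 2 + (\<Sum>i<n. C ^ 2 ^ (i + 1) * c (i + 1) * U (i + 2)) + C ^ 2 ^ (n + 1) * c (n + 1) * u"
    using sum.lessThan_Suc_shift[of "\<lambda>i. C ^ 2 ^ i * c i * U (i + 1)" "n + 1"] U by simp
  also have "(\<Sum>i<n + 2. D ^ 2 ^ i * c i * U i)
      = D * c 0 * u + D ^ 2 * c 1 * u ^ 2 + (\<Sum>i<n. D ^ 2 ^ (i + 2) * c (i + 2) * U (i + 2))"
    using sum.lessThan_Suc_shift[of "\<lambda>i. D ^ 2 ^ i * c i * U i" "n + 1"]
      sum.lessThan_Suc_shift[of "\<lambda>i. D ^ 2 ^ Suc i * c (Suc i) * U (Suc i)" n] U
    by (simp add: numeral_eq_Suc)
  also have "(\<Sum>i<n. c i * U (i + 2)) + c n * u + c (n + 1) * u ^ 2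
      + (C * c 0 * u ^ 2 + (\<Sum>i<n. C ^ 2 ^ (i + 1) * c (i + 1) * U (i + 2)) + C ^ 2 ^ (n + 1) * c (n + 1) * u)
      + (D * c 0 * u + D ^ 2 * c 1 * u ^ 2 + (\<Sum>i<n. D ^ 2 ^ (i + 2) * c (i + 2) * U (i + 2)))
    = (\<Sum>i<n. (c i + C ^ 2 ^ (i + 1) * c (i + 1) + D ^ 2 ^ (i + 2) * c (i + 2)) * U (i + 2))
      + (c n + C ^ 2 ^ (n + 1) * c (n + 1) + D * c 0) * u + (c (n + 1) + C * c 0 + D ^ 2 * c 1) * u ^ 2"
    by (simp add: sum.distrib algebra_simps)
  also have "(\<Sum>i<n. (c i + C ^ 2 ^ (i + 1) * c (i + 1) + D ^ 2 ^ (i + 2) * c (i + 2)) * U (i + 2)) = 0"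
    using rec by simp
  finally show ?thesis
    by simp
qed

end

lemma lin_inverse_coeff_eq:
  assumes "D \<noteq> 0"
  shows "lin_inverse_coeff C D m i =
    Ssh C D (m - 1 - i) ^ 2 ^ (i + 1) + D / D ^ 2 ^ (i + 1) * Ssh C D (i + 1)"
  unfolding lin_inverse_coeff_def powi_one_minus_power2[OF assms] ..

context
  assumes char_2: "(2::'a::field) = 0"
begin

lemma lin_inverse_coeff_recurrence:
  fixes C D :: 'a
  assumes "D \<noteq> 0" and "i + 2 < m"
  shows "lin_inverse_coeff C D m i + C ^ 2 ^ (i + 1) * lin_inverse_coeff C D m (i + 1)
    + D ^ 2 ^ (i + 2) * lin_inverse_coeff C D m (i + 2) = 0"
proof -
  define k where "k = m - i - 3"
  define X where "X = D ^ 2 ^ (i + 1)"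
  define C' where "C' = C ^ 2 ^ (i + 1)"
  have idx: "m - 1 - i = k + 2" "m - 1 - (i + 1) = k + 1" "m - 1 - (i + 2) = k"
    "i + 1 + 1 = i + 2" "i + 1 + 2 = i + 3" "i + 2 + 1 = i + 3"
    using assms(2) by (simp_all add: k_def)
  have "(2::nat) ^ (i + 2) = 2 ^ (i + 1) * 2" "(2::nat) ^ (i + 3) = 2 ^ (i + 1) * 4"
    by (simp_all add: power_add)
  then have D_powers: "D ^ 2 ^ (i + 2) = X ^ 2" "D ^ 2 ^ (i + 3) = X ^ 4"
    unfolding X_def by (simp_all only: power_mult)
  have "Ssh C D (k + 2) ^ 2 ^ (i + 1)
      = (C * Ssh C D (k + 1) ^ 2) ^ 2 ^ (i + 1) + (D ^ 2 * Ssh C D k ^ 4) ^ 2 ^ (i + 1)"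
    unfolding Ssh_squaring_recurrence[OF char_2] by (rule char2_power2_add[OF char_2])
  also have "\<dots> = C' * Ssh C D (k + 1) ^ 2 ^ (i + 2) + D ^ 2 ^ (i + 2) * Ssh C D k ^ 2 ^ (i + 3)"
    unfolding power_mult_distrib power2_power2_numeral C'_def by (simp only: idx)
  finally have lower: "Ssh C D (k + 2) ^ 2 ^ (i + 1)
      = C' * Ssh C D (k + 1) ^ 2 ^ (i + 2) + X ^ 2 * Ssh C D k ^ 2 ^ (i + 3)"
    unfolding D_powers .
  have upper: "Ssh C D (i + 3) = C' * Ssh C D (i + 2) + X * Ssh C D (i + 1)"
    unfolding C'_def X_def using Ssh_recurrence[of C D "i + 1"] by (simp add: numeral_eq_Suc)
  have "X \<noteq> 0"
    using assms(1) by (simp add: X_def)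
  have "lin_inverse_coeff C D m i + C' * lin_inverse_coeff C D m (i + 1)
        + X ^ 2 * lin_inverse_coeff C D m (i + 2)
      = 2 * (Ssh C D (k + 2) ^ 2 ^ (i + 1) + D / X * Ssh C D (i + 1)
        + C' * (D / X ^ 2 * Ssh C D (i + 2)))"
    unfolding lin_inverse_coeff_eq[OF assms(1)] idx D_powers X_def[symmetric]
    using lower upper \<open>X \<noteq> 0\<close>
    by (simp add: field_simps) (simp add: eval_nat_numeral mult_ac)
  then show ?thesis
    unfolding D_powers(1) C'_def[symmetric] by (simp add: char_2)
qed

lemma lin_inverse_coeff_boundary:
  fixes C D :: 'a
  assumes "D \<noteq> 0" and D_fixed: "D ^ 2 ^ (n + 2) = D"
  shows "lin_inverse_coeff C D (n + 2) n + C ^ 2 ^ (n + 1) * lin_inverse_coeff C D (n + 2) (n + 1)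
      + D * lin_inverse_coeff C D (n + 2) 0 = lin_scale C D (n + 2)" (is "?A = _")
    and "lin_inverse_coeff C D (n + 2) (n + 1) + C * lin_inverse_coeff C D (n + 2) 0
      + D ^ 2 * lin_inverse_coeff C D (n + 2) 1 = 0" (is "?B = _")
proof -
  let ?s = "Ssh C D" and ?X = "D ^ 2 ^ (n + 1)"
  have "(2::nat) ^ (n + 2) = 2 ^ (n + 1) * 2"
    by (simp add: power_add)
  then have "?X ^ 2 = D"
    using D_fixed by (simp only: power_mult)
  then have "D / ?X = ?X"
    using \<open>D \<noteq> 0\<close> by (simp add: field_simps power2_eq_square)
  note coeff = lin_inverse_coeff_eq[OF \<open>D \<noteq> 0\<close>]
  have c1: "lin_inverse_coeff C D (n + 2) n = 1 + ?X * ?s (n + 1)"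
    using \<open>D / ?X = ?X\<close> by (simp add: coeff)
  have c2: "lin_inverse_coeff C D (n + 2) (n + 1) = ?s (n + 2)"
    using D_fixed \<open>D \<noteq> 0\<close> by (simp add: coeff power_0_left)
  have c3: "lin_inverse_coeff C D (n + 2) 0 = ?s (n + 1) ^ 2 + 1 / D"
    using \<open>D \<noteq> 0\<close> by (simp add: coeff power2_eq_square)
  have c4: "lin_inverse_coeff C D (n + 2) 1 = ?s n ^ 4 + C / D ^ 3"
    using \<open>D \<noteq> 0\<close> by (simp add: coeff Ssh.simps(3) field_simps) (simp add: eval_nat_numeral mult_ac)
  note c = c1 c2 c3 c4
  have "lin_scale C D (n + 2) = C ^ 2 ^ (n + 1) * ?s (n + 2) + ?X * ?s (n + 1) + D * ?s (n + 1) ^ 2"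
    unfolding lin_scale_def using Ssh_recurrence[of C D "n + 1"] by (simp add: numeral_eq_Suc)
  then show "?A = lin_scale C D (n + 2)"
    unfolding c using \<open>D \<noteq> 0\<close> char_2 by (simp add: field_simps)
  show "?B = 0"
    unfolding c Ssh_squaring_recurrence[OF char_2] using \<open>D \<noteq> 0\<close> char_2
    by (simp add: field_simps) (simp add: eval_nat_numeral mult_ac)
qed

lemma lin_inverse_lin_quartic:
  fixes C D u :: 'a
  assumes "2 \<le> m" "D \<noteq> 0" "D ^ 2 ^ m = D" "u ^ 2 ^ m = u"
  shows "lin_inverse C D m (lin_quartic C D u) = lin_scale C D m * u"
proof -
  obtain n where m: "m = n + 2"
    using assms(1) by (metis add.commute le_Suc_ex)
  let ?c = "lin_inverse_coeff C D m"
  have "lin_inverse C D m (lin_quartic C D u)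
      = (?c n + C ^ 2 ^ (n + 1) * ?c (n + 1) + D * ?c 0) * u + (?c (n + 1) + C * ?c 0 + D ^ 2 * ?c 1) * u ^ 2"
    unfolding lin_inverse_def m
    by (rule sum_mult_lin_quartic_power2[OF char_2])
      (use assms m lin_inverse_coeff_recurrence in auto)
  then show ?thesis
    using lin_inverse_coeff_boundary[of D n C] assms(2,3) m by simp
qed

lemma lin_scale_idem:
  fixes C D :: 'a
  assumes "C ^ 2 ^ (n + 1) = C" "D ^ 2 ^ (n + 1) = D"
  shows "lin_scale C D (n + 1) ^ 2 = lin_scale C D (n + 1)"
proof -
  let ?s = "Ssh C D"
  have "(?s (n + 2) + D * ?s n ^ 2) ^ 2 = ?s (n + 2) ^ 2 + (D * ?s n ^ 2) ^ 2"
    using char2_power2_add[OF char_2, of _ _ 1] by simp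
  also have "\<dots> = C * ?s (n + 1) ^ 2 + D * ?s n ^ 2 + D ^ 2 * ?s n ^ 4"
    using Ssh_power2_recurrence[OF char_2, of C D n 1] assms
    by (simp add: power_mult_distrib flip: power_mult)
  also have "\<dots> = ?s (n + 2) + D * ?s n ^ 2"
    unfolding Ssh_squaring_recurrence[OF char_2] by (simp add: algebra_simps)
  finally show ?thesis
    by (simp add: lin_scale_def)
qed

lemma Ssh_twisted_sum_square:
  fixes C D \<beta> :: 'a
  assumes C: "C ^ 2 ^ m = C" and D: "D ^ 2 ^ m = D" and \<beta>: "\<beta> ^ 2 ^ m = \<beta>"
    and S: "Ssh C D m = 0" "Ssh C D (m + 1) = 1"
  shows "(\<Sum>j<m. (\<beta> * Ssh C D (m + k - j)) ^ 2 ^ j) ^ 2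
    = (\<Sum>j<m. (\<beta> * Ssh C D (m + k + 1 - j)) ^ 2 ^ j)"
proof -
  define g where "g j = (\<beta> * Ssh C D (m + k + 1 - j)) ^ 2 ^ j" for j
  have "(\<Sum>j<m. (\<beta> * Ssh C D (m + k - j)) ^ 2 ^ j) ^ 2
      = (\<Sum>j<m. ((\<beta> * Ssh C D (m + k - j)) ^ 2 ^ j) ^ 2)"
    using char2_power2_sum[OF char_2, of "\<lambda>j. (\<beta> * Ssh C D (m + k - j)) ^ 2 ^ j" "{..<m}" 1] by simp
  also have "\<dots> = (\<Sum>j<m. g (Suc j))"
    by (simp add: g_def mult.commute flip: power_mult)
  also have "\<dots> = (\<Sum>j<m. g j)"
  proof (rule sum_lessThan_Suc_shift_cyclic)
    show "g m = g 0"
      using Ssh_power_fixed[OF char_2 C D, of "Suc k"] Ssh_periodic[OF C D S, of "Suc k"] \<beta>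
      by (simp add: g_def power_mult_distrib)
  qed
  finally show ?thesis
    by (simp add: g_def)
qed

lemma lin_quartic_twisted_sum_eq_0:
  fixes C D \<beta> :: 'a
  assumes C: "C ^ 2 ^ m = C" and D: "D ^ 2 ^ m = D" and \<beta>: "\<beta> ^ 2 ^ m = \<beta>"
    and S: "Ssh C D m = 0" "Ssh C D (m + 1) = 1"
  shows "lin_quartic C D (\<Sum>j<m. (\<beta> * Ssh C D (m - j)) ^ 2 ^ j) = 0"
proof -
  define t where "t k = (\<Sum>j<m. (\<beta> * Ssh C D (m + k - j)) ^ 2 ^ j)" for k
  have t_sq: "t k ^ 2 = t (k + 1)" for k
    unfolding t_def using Ssh_twisted_sum_square[OF C D \<beta> S] by simp
  have "t 0 ^ 4 = (t 0 ^ 2) ^ 2"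
    by (simp flip: power_mult)
  then have t_4: "t 0 ^ 4 = t 2"
    using t_sq[of 0] t_sq[of 1] by (simp add: numeral_2_eq_2)
  have term_eq_0: "(\<beta> * Ssh C D (m + 2 - j)) ^ 2 ^ j + C * (\<beta> * Ssh C D (m + 1 - j)) ^ 2 ^ j
      + D * (\<beta> * Ssh C D (m - j)) ^ 2 ^ j = 0" if "j < m" for j
  proof -
    have "m - j + j = m" "m + 2 - j = m - j + 2" "m + 1 - j = m - j + 1"
      using that by simp_all
    then have "Ssh C D (m + 2 - j) ^ 2 ^ j = C * Ssh C D (m + 1 - j) ^ 2 ^ j + D * Ssh C D (m - j) ^ 2 ^ j"
      using Ssh_power2_recurrence[OF char_2, of C D "m - j" j] C D by simp
    then show ?thesis
      by (simp add: power_mult_distrib algebra_simps char_2)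
  qed
  have "lin_quartic C D (t 0) = t 2 + C * t 1 + D * t 0"
    unfolding lin_quartic_def t_4 using t_sq[of 0] by simp
  also have "\<dots> = 0"
    using term_eq_0 by (simp add: t_def sum_distrib_left flip: sum.distrib)
  finally show ?thesis
    by (simp add: t_def)
qed

lemma lin_quartic_has_nonzero_root:
  fixes C D :: 'a
  assumes C: "C ^ 2 ^ m = C" and D: "D ^ 2 ^ m = D" and S: "Ssh C D m = 0" "Ssh C D (m + 1) = 1"
    and card: "2 ^ m \<le> card {u::'a. u ^ 2 ^ m = u}" and "0 < m"
  shows "\<exists>w. w ^ 2 ^ m = w \<and> w \<noteq> 0 \<and> lin_quartic C D w = 0"
proof (rule ccontr)
  assume no_root: "\<not> ?thesis"
  have roots: "(\<Sum>j<m. Ssh C D (m + 1 - j) ^ 2 ^ j * \<beta> ^ 2 ^ j) = 0"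
    if "\<beta> \<in> {u. u ^ 2 ^ m = u}" for \<beta>
  proof -
    let ?u = "\<Sum>j<m. (\<beta> * Ssh C D (m - j)) ^ 2 ^ j"
    have \<beta>: "\<beta> ^ 2 ^ m = \<beta>"
      using that by simp
    have "?u ^ 2 ^ m = (\<Sum>j<m. ((\<beta> * Ssh C D (m - j)) ^ 2 ^ j) ^ 2 ^ m)"
      by (rule char2_power2_sum[OF char_2])
    also have "\<dots> = (\<Sum>j<m. ((\<beta> * Ssh C D (m - j)) ^ 2 ^ m) ^ 2 ^ j)"
      by (intro sum.cong refl) (metis mult.commute power_mult)
    also have "\<dots> = ?u"
      by (simp only: power_mult_distrib \<beta> Ssh_power_fixed[OF char_2 C D])
    finally have "?u = 0"
      using no_root lin_quartic_twisted_sum_eq_0[OF C D \<beta> S] by blast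
    moreover have "?u ^ 2 = (\<Sum>j<m. (\<beta> * Ssh C D (m + 1 - j)) ^ 2 ^ j)"
      using Ssh_twisted_sum_square[OF C D \<beta> S, of 0] unfolding add_0_right .
    ultimately have "(\<Sum>j<m. (\<beta> * Ssh C D (m + 1 - j)) ^ 2 ^ j) = 0"
      by (metis zero_power2)
    then show ?thesis
      by (simp add: power_mult_distrib mult.commute)
  qed
  have "Ssh C D (m + 1 - 0) ^ 2 ^ 0 = 0"
    by (rule linearized_poly_eq_0_imp_coeff_eq_0[where c = "\<lambda>j. Ssh C D (m + 1 - j) ^ 2 ^ j",
          OF card roots \<open>0 < m\<close>])
  with S show False
    by simp
qed

lemma Ssh_eq_1_if_lin_scale_eq_0:
  fixes C D :: 'a
  assumes "D \<noteq> 0" "lin_scale C D (n + 1) = 0" "Ssh C D (n + 1) = 0"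
  shows "Ssh C D (n + 2) = 1"
proof -
  have "Ssh C D (n + 2) = D * Ssh C D n ^ 2"
    using assms(2) by (simp add: lin_scale_def char2_add_eq_0_iff[OF char_2])
  then have "Ssh C D (n + 2) ^ 2 = D ^ 2 * Ssh C D n ^ 4"
    by (simp add: power_mult_distrib flip: power_mult)
  also have "\<dots> = Ssh C D (n + 2)"
    using Ssh_squaring_recurrence[OF char_2, of C D n] assms(3) by simp
  finally have "Ssh C D (n + 2) ^ 2 = Ssh C D (n + 2)" .
  moreover have "Ssh C D (n + 2) \<noteq> 0"
    using Ssh_not_both_zero[OF assms(1), of C "n + 1"] assms(3) by (simp add: add.assoc)
  ultimately show ?thesis
    by (simp add: power2_eq_square)
qed

lemma lin_quartic_image_eq:
  fixes C D :: 'a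
  assumes C: "C ^ 2 ^ m = C" and D: "D ^ 2 ^ m = D" and fin: "finite {u::'a. u ^ 2 ^ m = u}"
    and no_root: "\<And>w. w ^ 2 ^ m = w \<Longrightarrow> lin_quartic C D w = 0 \<Longrightarrow> w = 0"
  shows "lin_quartic C D ` {u. u ^ 2 ^ m = u} = {u. u ^ 2 ^ m = u}"
proof -
  let ?F = "{u::'a. u ^ 2 ^ m = u}"
  have maps: "lin_quartic C D ` ?F \<subseteq> ?F"
    by (rule image_subsetI) (simp add: lin_quartic_fixed[OF char_2 C D])
  have "inj_on (lin_quartic C D) ?F"
  proof (rule inj_onI)
    fix u v
    assume "u \<in> ?F" "v \<in> ?F" "lin_quartic C D u = lin_quartic C D v"
    then have "(u + v) ^ 2 ^ m = u + v" "lin_quartic C D (u + v) = 0"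
      by (simp_all add: char2_power2_add[OF char_2] lin_quartic_add[OF char_2] char_2)
    then show "u = v"
      using no_root char2_add_eq_0_iff[OF char_2] by blast
  qed
  then show ?thesis
    using endo_inj_surj[OF fin maps] by blast
qed

lemma lin_scale_eq_1:
  fixes C D :: 'a
  assumes "2 \<le> m" and C: "C ^ 2 ^ m = C" and D: "D ^ 2 ^ m = D" "D \<noteq> 0"
    and card: "2 ^ m \<le> card {u::'a. u ^ 2 ^ m = u}"
    and no_root: "\<And>w. w ^ 2 ^ m = w \<Longrightarrow> lin_quartic C D w = 0 \<Longrightarrow> w = 0"
  shows "lin_scale C D m = 1"
proof -
  let ?F = "{u::'a. u ^ 2 ^ m = u}"
  define n where "n = m - 1"
  have m: "m = n + 1"
    using assms(1) by (simp add: n_def)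
  have "finite ?F"
  proof (rule ccontr)
    assume "infinite ?F"
    with card show False
      by simp
  qed
  have onto: "lin_quartic C D ` ?F = ?F"
    by (rule lin_quartic_image_eq[OF C D(1) \<open>finite ?F\<close> no_root])
  have "lin_scale C D m ^ 2 = lin_scale C D m"
    unfolding m by (rule lin_scale_idem) (use C D m in simp_all)
  moreover have "lin_scale C D m \<noteq> 0"
  proof
    assume scale_0: "lin_scale C D m = 0"
    have "(\<Sum>i<m. lin_inverse_coeff C D m i * a ^ 2 ^ i) = 0" if "a \<in> ?F" for a
    proof -
      have "a \<in> lin_quartic C D ` ?F"
        using that by (simp only: onto)
      then obtain u where "u \<in> ?F" "a = lin_quartic C D u"
        by (rule imageE)
      then show ?thesis
        using lin_inverse_lin_quartic[OF assms(1) D(2,1)] scale_0 unfolding lin_inverse_def by simp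
    qed
    moreover have "n < m"
      using assms(1) by (simp add: n_def)
    ultimately have "lin_inverse_coeff C D m n = 0"
      using linearized_poly_eq_0_imp_coeff_eq_0[OF card] by blast
    then have "Ssh C D m = 0"
      using D unfolding m by (simp add: lin_inverse_coeff_eq power_0_left)
    moreover have "Ssh C D (m + 1) = 1"
      using Ssh_eq_1_if_lin_scale_eq_0[OF D(2)] scale_0 \<open>Ssh C D m = 0\<close> by (simp add: m)
    ultimately obtain w where "w ^ 2 ^ m = w" "w \<noteq> 0" "lin_quartic C D w = 0"
      using lin_quartic_has_nonzero_root[OF C D(1) _ _ card] assms(1) by auto
    then show False
      using no_root by blast
  qed
  ultimately show ?thesis
    by (simp add: power2_eq_square)
qed

end

section \<open>The permutation polynomial\<close>

text \<open>\<open>B\<close>, \<open>C\<close>, \<open>D\<close> are parameters with defining equations and \<open>e\<close>, \<open>P\<close> are abbreviations,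
  so that the local definitions of \<open>theorem3p11\<close> instantiate the locale verbatim.\<close>
locale perm_poly_Fq2 =
  fixes q m :: nat and b \<delta> B C D :: "'a::{field,finite}"
  assumes q_eq: "q = 2 ^ m" and q_ge_4: "4 \<le> q" and card_UNIV: "card (UNIV :: 'a set) = q ^ 2"
    and b_fixed: "b ^ q = b" and b_nonzero: "b \<noteq> 0" and \<delta>_not_fixed: "\<delta> ^ q \<noteq> \<delta>"
    and B_eq: "B = b ^ 4 * \<delta> ^ (q + 1) * Tr q \<delta>" and C_eq: "C = b ^ 4 * Tr q \<delta>"
    and D_eq: "D = b ^ 4 * (Tr q \<delta>) ^ 2"
begin

abbreviation e :: nat where
  "e \<equiv> q * (2 * q + 1) div 4"

abbreviation P :: "'a \<Rightarrow> 'a" where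
  "P x \<equiv> b * (x ^ q + x + \<delta>) ^ e + x"

lemma m_ge_2: "2 \<le> m"
proof (rule ccontr)
  assume "\<not> 2 \<le> m"
  then have "q \<le> 2 ^ 1"
    unfolding q_eq by (intro power_increasing) auto
  with q_ge_4 show False
    by simp
qed

lemma char_2: "(2::'a) = 0"
  using card_power2_imp_char2[of "2 * m"] card_UNIV m_ge_2 by (simp add: q_eq power_mult mult.commute)

lemma power_q_add: "(x + y) ^ q = x ^ q + (y::'a) ^ q"
  unfolding q_eq by (rule char2_power2_add[OF char_2])

lemma power_q_q: "(x::'a) ^ (q * q) = x"
  using field_power_card_eq_self[of x] card_UNIV by (simp add: power2_eq_square)

lemma power_q_commute: "((x::'a) ^ k) ^ q = (x ^ q) ^ k"
  by (simp flip: power_mult add: mult.commute)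

lemma Tr_add: "Tr q (x + y) = Tr q x + Tr q (y::'a)"
  by (simp add: Tr_def power_q_add algebra_simps)

lemma Tr_fixed: "Tr q x ^ q = Tr q (x::'a)"
  by (simp add: Tr_def power_q_add power_q_q add.commute flip: power_mult)

lemma Tr_eq_0_iff: "Tr q x = 0 \<longleftrightarrow> (x::'a) ^ q = x"
  by (auto simp: Tr_def char2_add_eq_0_iff[OF char_2])

lemma card_fixed_ge: "q \<le> card {u::'a. u ^ q = u}"
proof -
  let ?F = "{u::'a. u ^ q = u}" and ?T = "Tr q :: 'a \<Rightarrow> 'a"
  have "range ?T \<subseteq> ?F"
    using Tr_fixed by auto
  then have "card (range ?T) \<le> card ?F"
    by (rule card_mono[rotated]) simp
  moreover have "q ^ 2 \<le> card (range ?T) * card {x. ?T x = 0}"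
    using card_UNIV_le_card_range_mult_card_kernel[of ?T] Tr_add card_UNIV by simp
  ultimately have "q ^ 2 \<le> card ?F ^ 2"
    unfolding Tr_eq_0_iff power2_eq_square by (meson le_trans mult_le_mono1)
  then show ?thesis
    by (rule power2_le_imp_le) simp
qed

lemma C_fixed: "C ^ q = C" and D_fixed: "D ^ q = D"
  by (simp_all add: C_eq D_eq power_mult_distrib b_fixed Tr_fixed power_q_commute)

lemma D_nonzero: "D \<noteq> 0"
  using \<delta>_not_fixed b_nonzero by (simp add: D_eq Tr_eq_0_iff)

lemma power_e_4: "(z ^ e) ^ 4 = z ^ 2 * (z::'a) ^ q"
proof -
  have "2 + (m - 2) = m"
    using m_ge_2 by simp
  then have "q = 2 ^ (2 + (m - 2))"
    by (simp only: q_eq)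
  then have "q = 4 * 2 ^ (m - 2)"
    by (simp add: power_add)
  then have "e * 4 = q * q * 2 + q"
    by simp
  then have "(z ^ e) ^ 4 = (z ^ (q * q)) ^ 2 * z ^ q"
    by (simp only: power_mult[symmetric] power_add)
  then show ?thesis
    by (simp only: power_q_q)
qed

lemma power_4_add: "(x + y) ^ 4 = x ^ 4 + (y::'a) ^ 4"
  using char2_power2_add[OF char_2, of x y 2] by simp

lemma power_q_power_q: "((x::'a) ^ q) ^ q = x"
  by (simp add: power_q_q flip: power_mult)

lemma Tr_power_4: "Tr q y ^ 4 = Tr q ((y::'a) ^ 4)"
  by (simp add: Tr_def power_4_add power_q_commute)

lemma Tr_power_e_4:
  assumes "w ^ q = w"
  shows "Tr q (b * (\<delta> + w) ^ e) ^ 4 = C * w ^ 2 + D * w + (B::'a)"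
proof -
  define z where "z = \<delta> + w"
  have zq: "z ^ q = \<delta> ^ q + w"
    by (simp add: z_def power_q_add assms)
  have "Tr q (b * z ^ e) ^ 4 = Tr q (b ^ 4 * (z ^ 2 * z ^ q))"
    unfolding Tr_power_4 power_mult_distrib power_e_4 ..
  also have "\<dots> = b ^ 4 * (z ^ 2 * z ^ q + (z ^ q) ^ 2 * z)"
    unfolding Tr_def power_mult_distrib power_q_commute[of z 2] power_q_power_q power_q_commute[of b 4] b_fixed
    by (simp add: algebra_simps)
  also have "\<dots> = b ^ 4 * (z * z ^ q) * (z + z ^ q)"
    by (simp add: algebra_simps power2_eq_square)
  also have "z + z ^ q = Tr q \<delta>"
    using zq by (simp add: Tr_def z_def algebra_simps char_2)
  also have "z * z ^ q = \<delta> ^ (q + 1) + Tr q \<delta> * w + w ^ 2"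
    using zq by (simp add: Tr_def z_def algebra_simps power2_eq_square)
  finally show ?thesis
    by (simp add: z_def B_eq C_eq D_eq algebra_simps power2_eq_square)
qed

lemma Tr_P: "Tr q (P x) = Tr q (b * (\<delta> + Tr q x) ^ e) + Tr q (x::'a)"
proof -
  have "x ^ q + x + \<delta> = \<delta> + Tr q x"
    by (simp add: Tr_def add_ac)
  then show ?thesis
    by (simp only: Tr_add)
qed

lemma P_trace_identity: "P x ^ (4 * q) + P x ^ 4 + B = lin_quartic C D (Tr q (x::'a))"
proof -
  have "P x ^ (4 * q) + P x ^ 4 = Tr q (P x) ^ 4"
    unfolding Tr_power_4 unfolding Tr_def power_mult by (rule add.commute)
  also have "\<dots> = C * Tr q x ^ 2 + D * Tr q x + B + Tr q x ^ 4"
    unfolding Tr_P power_4_add Tr_power_e_4[OF Tr_fixed] ..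
  finally show ?thesis
    by (simp add: lin_quartic_def algebra_simps char_2)
qed

lemma lin_quartic_root_eq_0:
  assumes "inj P" and "w ^ q = w" and "lin_quartic C D w = 0"
  shows "w = (0::'a)"
proof -
  define x where "x = P 0 + b * (\<delta> + w) ^ e"
  have zero_q: "(0::'a) ^ q = 0"
    using q_ge_4 by simp
  have "Tr q x ^ 4 = Tr q (b * (\<delta> + 0) ^ e) ^ 4 + Tr q (b * (\<delta> + w) ^ e) ^ 4"
    by (simp add: x_def zero_q Tr_add power_4_add)
  also have "\<dots> = C * w ^ 2 + D * w"
    using Tr_power_e_4[OF zero_q] Tr_power_e_4[OF assms(2)] by (simp add: char_2)
  also have "\<dots> = w ^ 4"
    using assms(3) by (simp add: lin_quartic_def char2_add_eq_0_iff[OF char_2] add.assoc)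
  finally have "Tr q x = w"
    using char2_power2_inj[OF char_2, of "Tr q x" 2 w] by simp
  then have "x ^ q + x + \<delta> = \<delta> + w"
    by (simp add: Tr_def add_ac)
  then have "P x = P 0"
    by (simp add: x_def add_ac char_2)
  then have "x = 0"
    by (rule injD[OF assms(1)])
  with \<open>Tr q x = w\<close> show ?thesis
    by (simp add: Tr_def zero_q)
qed

lemma P_left_inverse:
  assumes "inj P"
  shows "P x + b * (\<delta> + lin_inverse C D m (P x ^ (4 * q) + P x ^ 4 + B)) ^ e = x"
proof -
  have "lin_scale C D m = 1"
    using lin_scale_eq_1[OF char_2 m_ge_2 _ _ D_nonzero, of C] C_fixed D_fixed card_fixed_ge
      lin_quartic_root_eq_0[OF assms] by (simp add: q_eq)
  then have "lin_inverse C D m (P x ^ (4 * q) + P x ^ 4 + B) = Tr q x"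
    using lin_inverse_lin_quartic[OF char_2 m_ge_2 D_nonzero, of "Tr q x"] D_fixed Tr_fixed
    unfolding P_trace_identity by (simp add: q_eq)
  moreover have "x ^ q + x + \<delta> = \<delta> + Tr q x"
    by (simp add: Tr_def add_ac)
  ultimately show ?thesis
    by (simp add: add_ac char_2)
qed

end

theorem theorem3p11:
  fixes b \<delta> :: "'a::{field,finite}" and m q :: nat
    and B C D :: 'a and P Pinv :: "'a \<Rightarrow> 'a"
  assumes hq: "q = 2 ^ m" and hq4: "q \<ge> 4" and hcard: "card (UNIV :: 'a set) = q ^ 2"
    and hb: "b ^ q = b" "b \<noteq> 0"
    and h\<delta>: "\<delta> ^ q \<noteq> \<delta>"
  defines "B \<equiv> b ^ 4 * \<delta> ^ (q + 1) * Tr q \<delta>"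
    and "C \<equiv> b ^ 4 * Tr q \<delta>"
    and "D \<equiv> b ^ 4 * (Tr q \<delta>) ^ 2"
    and "P \<equiv> (\<lambda>x. b * (x ^ q + x + \<delta>) ^ (q * (2 * q + 1) div 4) + x)"
    and "Pinv \<equiv> (\<lambda>x. x + b * (\<delta> + (\<Sum>i<m.
            ((Ssh C D (m - 1 - i)) ^ (2 ^ (i + 1)) + D powi (1 - 2 ^ (i + 1)) * Ssh C D (i + 1))
            * (x ^ (4 * q) + x ^ 4 + B) ^ (2 ^ i))) ^ (q * (2 * q + 1) div 4))"
  assumes hperm: "bij P"
  shows "\<forall>c. P (Pinv c) = c \<and> Pinv (P c) = c"
proof -
  interpret perm_poly_Fq2 q m b \<delta> B C D
    by unfold_locales (use hq hq4 hcard hb h\<delta> in \<open>simp_all add: B_def C_def D_def\<close>)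
  have left_inverse: "Pinv (P x) = x" for x
    using P_left_inverse[OF bij_is_inj[OF hperm[unfolded P_def]], of x]
    unfolding Pinv_def P_def lin_inverse_def lin_inverse_coeff_def .
  show ?thesis
  proof (intro allI conjI)
    fix c
    obtain x where "c = P x"
      using hperm by (metis bij_pointE)
    then show "P (Pinv c) = c" "Pinv (P c) = c"
      using left_inverse by simp_all
  qed
qed

end
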